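(* For every integer $n\ge 0$, $$\sum_{j,k}\genfrac{\{}{\}}{0pt}{}{n}{k}\genfrac{[}{]}{0pt}{}{k}{j}\binom{n}{j}(-1)^k=(-1)^n .$$
   Context: Here $\genfrac{[}{]}{0pt}{}{n}{k}$ denotes the unsigned (absolute) Stirling number of the first kind and $\genfrac{\{}{\}}{0pt}{}{n}{k}$ the ordinary Stirling number of the second kind (Knuth's notation), with $\genfrac{[}{]}{0pt}{}{0}{0}=\genfrac{\{}{\}}{0pt}{}{0}{0}=1$, $\genfrac{[}{]}{0pt}{}{n}{0}=\genfrac{\{}{\}}{0pt}{}{n}{0}=0$ for $n>0$, and $\genfrac{[}{]}{0pt}{}{n}{k}=\genfrac{\{}{\}}{0pt}{}{n}{k}=0$ for $0\le n<k$. The double sum is over all integers $j,k$ with $0\le j\le k\le n$. *)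

theory Defs
  imports "HOL-Combinatorics.Stirling"
begin

end

theory Submission
  imports Defs
begin

text \<open>The sum collapses because the Stirling numbers of the two kinds, signed by \<open>(-1)^k\<close>,
  form mutually inverse triangular matrices (orthogonality, proved from the two triangle
  recurrences); swapping the order of summation leaves only the term \<open>j = n\<close>, with
  \<open>n choose n = 1\<close>.\<close>

lemma sum_Stirling_stirling_0:
  "(\<Sum>k\<le>Suc n. of_nat (Stirling (Suc n) k) * of_nat (stirling k 0) * (-1) ^ k :: 'a :: comm_ring_1)
     = 0"
proof (intro sum.neutral ballI)
  fix k show "of_nat (Stirling (Suc n) k) * of_nat (stirling k 0) * (-1) ^ k = (0 :: 'a)"
    by (cases k) simp_all
qed

lemma sum_Stirling_stirling_Suc:
  fixes n j :: nat
  defines "w \<equiv> \<lambda>m k i. of_nat (Stirling m k) * of_nat (stirling k i) * (-1) ^ k :: 'a :: comm_ring_1"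
  shows "(\<Sum>k\<le>Suc n. w (Suc n) k (Suc j)) = - (\<Sum>k\<le>n. w n k j)"
proof -
  \<comment> \<open>the two sums of \<open>k \<cdot> w n k (Suc j)\<close> produced by the recurrences cancel\<close>
  have shift: "(\<Sum>k\<le>n. of_nat (Suc k) * w n (Suc k) (Suc j)) = (\<Sum>k\<le>n. of_nat k * w n k (Suc j))"
  proof -
    have "(\<Sum>k\<le>n. of_nat (Suc k) * w n (Suc k) (Suc j)) = (\<Sum>k\<le>Suc n. of_nat k * w n k (Suc j))"
      by (subst sum.atMost_Suc_shift) simp
    also have "\<dots> = (\<Sum>k\<le>n. of_nat k * w n k (Suc j))"
      by (simp add: w_def)
    finally show ?thesis .
  qed
  have "(\<Sum>k\<le>Suc n. w (Suc n) k (Suc j)) = (\<Sum>k\<le>n. w (Suc n) (Suc k) (Suc j))"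
    by (subst sum.atMost_Suc_shift) (simp add: w_def)
  also have "\<dots> = (\<Sum>k\<le>n. of_nat (Suc k) * w n (Suc k) (Suc j) - of_nat k * w n k (Suc j) - w n k j)"
    by (intro sum.cong refl) (simp add: w_def algebra_simps)
  also have "\<dots> = - (\<Sum>k\<le>n. w n k j)"
    by (simp only: sum_subtractf shift) simp
  finally show ?thesis .
qed

theorem Stirling_stirling_orthogonal:
  "(\<Sum>k\<le>n. of_nat (Stirling n k) * of_nat (stirling k j) * (-1) ^ k :: 'a :: comm_ring_1)
     = (if j = n then (-1) ^ n else 0)"
proof (induction n arbitrary: j)
  case 0
  then show ?case by (cases j) auto
next
  case (Suc n)
  then show ?case
    by (cases j) (simp_all only: sum_Stirling_stirling_0 sum_Stirling_stirling_Suc, auto)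
qed

theorem mainTheorem3:
  fixes n :: nat
  shows "(\<Sum>k\<le>n. \<Sum>j\<le>k. int (Stirling n k) * int (stirling k j) * int (n choose j) * (-1) ^ k)
         = (-1) ^ n"
proof -
  have "(\<Sum>k\<le>n. \<Sum>j\<le>k. int (Stirling n k) * int (stirling k j) * int (n choose j) * (-1) ^ k)
      = (\<Sum>k\<le>n. \<Sum>j\<le>n. int (Stirling n k) * int (stirling k j) * int (n choose j) * (-1) ^ k)"
    by (intro sum.cong refl sum.mono_neutral_left) auto
  also have "\<dots> = (\<Sum>j\<le>n. int (n choose j)
      * (\<Sum>k\<le>n. int (Stirling n k) * int (stirling k j) * (-1) ^ k))"
    by (subst sum.swap) (simp add: sum_distrib_left algebra_simps)
  also have "\<dots> = (-1) ^ n"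
    by (simp add: Stirling_stirling_orthogonal if_distrib[of "\<lambda>x. _ * x"] cong: if_cong)
  finally show ?thesis .
qed

end
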